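(* Let $T$ be an $n\times n$ complex matrix with distinct eigenvalues $\lambda_1,\dots,\lambda_n$. Let $u_1,\dots,u_n$ be unit eigenvectors of $T$ with $Tu_i=\lambda_iu_i$, and let $v_1,\dots,v_n$ be unit eigenvectors of $T^*$ with $T^*v_i=\overline{\lambda_i}v_i$. If there exist complex numbers $\alpha_1,\dots,\alpha_n$ of modulus one such that \[ \langle u_i,u_j\rangle=\overline{\alpha_i}\,\alpha_j\,\langle v_j,v_i\rangle \] for all $1\le i<j\le n$, then $T$ is unitarily equivalent to a complex symmetric matrix.
   Context: $\langle\cdot,\cdot\rangle$ is the standard inner product on $\mathbb{C}^n$, linear in the first argument. A complex symmetric matrix is a square complex matrix $S$ with $S=S^t$. Two matrices $A,B\in M_n(\mathbb{C})$ are unitarily equivalent if $A=W^*BW$ for some unitary $W$. *)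

theory Defs
  imports "HOL-Analysis.Analysis"
begin

definition cinner :: "complex^'n \<Rightarrow> complex^'n \<Rightarrow> complex" where
  "cinner x y = (\<Sum>k\<in>UNIV. x $ k * cnj (y $ k))"

definition adjoint_mat :: "complex^'n^'n \<Rightarrow> complex^'n^'n" where
  "adjoint_mat A = (\<chi> i j. cnj (A $ j $ i))"

definition unitary_mat :: "complex^'n^'n \<Rightarrow> bool" where
  "unitary_mat W \<longleftrightarrow> adjoint_mat W ** W = mat 1 \<and> W ** adjoint_mat W = mat 1"

definition unitarily_equivalent :: "complex^'n^'n \<Rightarrow> complex^'n^'n \<Rightarrow> bool" where
  "unitarily_equivalent A B \<longleftrightarrow> (\<exists>W. unitary_mat W \<and> A = adjoint_mat W ** B ** W)"

definition complex_symmetric :: "complex^'n^'n \<Rightarrow> bool" where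
  "complex_symmetric S \<longleftrightarrow> transpose S = S"

end

theory Submission imports Defs begin

text \<open>
  The eigenvectors \<open>u\<^sub>i\<close> of \<open>T\<close> form a basis, and the vectors \<open>w\<^sub>i = \<alpha>\<^sub>i v\<^sub>i\<close> are
  eigenvectors of \<open>T\<^sup>*\<close> forming a biorthogonal system to it. The hypothesis says precisely that
  the Gram matrix of the \<open>w\<^sub>i\<close> is the transpose of that of the \<open>u\<^sub>i\<close>, so the antilinear map
  \<open>C\<close> with \<open>C u\<^sub>i = w\<^sub>i\<close> satisfies \<open>\<langle>Cx, Cy\<rangle> = \<langle>y, x\<rangle>\<close>; it turns out to be an involution
  with \<open>CT = T\<^sup>*C\<close>, i.e. a conjugation intertwining \<open>T\<close> and \<open>T\<^sup>*\<close>. The vectors fixed by a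
  conjugation form a real form of \<open>\<complex>\<^sup>n\<close>, which has an orthonormal basis of fixed vectors
  \<open>e\<^sub>k\<close>, and in that basis the matrix entries \<open>\<langle>Te\<^sub>l, e\<^sub>k\<rangle>\<close> are symmetric.
\<close>

lemma cinner_add_left: "cinner (x + y) z = cinner x z + cinner y z"
  by (simp add: cinner_def distrib_right sum.distrib)

lemma cinner_add_right: "cinner x (y + z) = cinner x y + cinner x z"
  by (simp add: cinner_def distrib_left sum.distrib)

lemma cinner_diff_left: "cinner (x - y) z = cinner x z - cinner y z"
  by (simp add: cinner_def left_diff_distrib sum_subtractf)

lemma cinner_scale_left: "cinner (a *s x) y = a * cinner x y"
  by (simp add: cinner_def sum_distrib_left mult.assoc)

lemma cinner_scale_right: "cinner x (a *s y) = cnj a * cinner x y"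
  by (simp add: cinner_def sum_distrib_left algebra_simps)

lemma cinner_zero_left [simp]: "cinner 0 y = 0"
  by (simp add: cinner_def)

lemma cinner_zero_right [simp]: "cinner y 0 = 0"
  by (simp add: cinner_def)

lemma cinner_sum_left: "cinner (\<Sum>i\<in>A. f i) y = (\<Sum>i\<in>A. cinner (f i) y)"
  by (induction A rule: infinite_finite_induct) (auto simp: cinner_add_left)

lemma cinner_sum_right: "cinner y (\<Sum>i\<in>A. f i) = (\<Sum>i\<in>A. cinner y (f i))"
  by (induction A rule: infinite_finite_induct) (auto simp: cinner_add_right)

lemma cinner_commute_cnj: "cnj (cinner x y) = cinner y x"
  by (simp add: cinner_def mult.commute)

lemma inner_eq_Re_cinner: "x \<bullet> y = Re (cinner x y)"
  by (simp add: cinner_def inner_vec_def inner_complex_def)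

lemma cinner_self: "cinner x x = complex_of_real ((norm x)\<^sup>2)"
proof -
  have "cinner x x = (\<Sum>k\<in>UNIV. complex_of_real ((cmod (x $ k))\<^sup>2))"
    unfolding cinner_def by (rule sum.cong) (simp_all only: complex_norm_square)
  also have "(\<Sum>k\<in>UNIV. complex_of_real ((cmod (x $ k))\<^sup>2)) = complex_of_real ((norm x)\<^sup>2)"
    by (simp add: norm_vec_def L2_set_def sum_nonneg)
  finally show ?thesis .
qed

lemma cinner_self_eq_0_iff [simp]: "cinner x x = 0 \<longleftrightarrow> x = 0"
  by (simp add: cinner_self)

lemma cinner_matrix_adjoint: "cinner (A *v x) y = cinner x (adjoint_mat A *v y)"
  by (simp add: cinner_def adjoint_mat_def matrix_vector_mult_def sum_distrib_left
      sum_distrib_right mult_ac) (rule sum.swap)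

lemma cinner_linear_combinations:
  "cinner (\<Sum>i\<in>A. f i *s x i) (\<Sum>j\<in>B. g j *s y j)
     = (\<Sum>i\<in>A. \<Sum>j\<in>B. f i * cnj (g j) * cinner (x i) (y j))"
proof -
  have "cinner (\<Sum>i\<in>A. f i *s x i) (\<Sum>j\<in>B. g j *s y j)
      = (\<Sum>i\<in>A. f i * cinner (x i) (\<Sum>j\<in>B. g j *s y j))"
    by (simp add: cinner_sum_left cinner_scale_left)
  then show ?thesis
    by (simp add: cinner_sum_right cinner_scale_right sum_distrib_left mult.assoc)
qed

lemma scaleR_eq_scale_of_real: "(c::real) *\<^sub>R (x::complex^'n) = complex_of_real c *s x"
  unfolding vec_eq_iff vector_scaleR_component vector_smult_component by (simp add: scaleR_conv_of_real)


subsection \<open>Eigenvectors for distinct eigenvalues\<close>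

lemma eigenvectors_distinct_eigenvalues_coeffs_zero:
  fixes A :: "'a::field^'n^'n" and x :: "'i \<Rightarrow> 'a^'n"
  assumes lam_inj: "inj lam" and nonzero: "\<And>i. x i \<noteq> 0"
    and eigen: "\<And>i. A *v x i = lam i *s x i"
    and "finite I" and "(\<Sum>i\<in>I. c i *s x i) = 0"
  shows "\<forall>i\<in>I. c i = 0"
  using assms(4,5)
proof (induction I arbitrary: c rule: finite_induct)
  case empty
  then show ?case by simp
next
  case (insert k I)
  have rest: "(\<Sum>i\<in>I. c i *s x i) = - (c k *s x k)"
    using insert by (simp add: eq_neg_iff_add_eq_0 add.commute)
  \<comment> \<open>applying \<open>A - \<lambda>\<^sub>k\<close> removes the \<open>k\<close>-th term\<close>
  have "(\<Sum>i\<in>I. (c i * lam i) *s x i) = A *v (\<Sum>i\<in>I. c i *s x i)"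
    by (simp add: vec.sum vec.scale eigen)
  also have "\<dots> = lam k *s (\<Sum>i\<in>I. c i *s x i)"
    unfolding rest by (simp add: vec.neg vec.scale eigen vec_eq_iff)
  also have "\<dots> = (\<Sum>i\<in>I. (lam k * c i) *s x i)"
    by (simp add: vec.scale_sum_right)
  finally have "(\<Sum>i\<in>I. (c i * (lam i - lam k)) *s x i) = 0"
    by (simp add: algebra_simps sum_subtractf)
  then have "\<forall>i\<in>I. c i * (lam i - lam k) = 0"
    by (rule insert.IH)
  moreover have "\<forall>i\<in>I. lam i \<noteq> lam k"
    using insert.hyps(2) lam_inj by (metis injD)
  ultimately have "\<forall>i\<in>I. c i = 0"
    by simp
  moreover from this have "c k = 0"
    using rest nonzero[of k] by simp
  ultimately show ?case
    by simp
qed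

lemma eigenvectors_distinct_eigenvalues_expansion:
  fixes A :: "'a::field^'n^'n" and x :: "'n \<Rightarrow> 'a^'n"
  assumes lam_inj: "inj lam" and nonzero: "\<And>i. x i \<noteq> 0"
    and eigen: "\<And>i. A *v x i = lam i *s x i"
  obtains c where "y = (\<Sum>i\<in>UNIV. c i *s x i)"
proof -
  have x_inj: "inj x"
  proof (rule injI)
    fix i j assume "x i = x j"
    then have "lam i *s x i = lam j *s x i"
      by (metis eigen)
    then show "i = j"
      using nonzero[of i] lam_inj by (simp add: injD)
  qed
  have "vec.independent (range x)"
  proof (rule vec.independent_if_scalars_zero)
    fix f z assume sum0: "(\<Sum>z\<in>range x. f z *s z) = 0" and "z \<in> range x"
    have "(\<Sum>i\<in>UNIV. f (x i) *s x i) = 0"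
      using sum0 unfolding sum.reindex[OF x_inj] o_def .
    then have "\<forall>i\<in>UNIV. f (x i) = 0"
      by (rule eigenvectors_distinct_eigenvalues_coeffs_zero[OF assms finite_class.finite_UNIV])
    then show "f z = 0"
      using \<open>z \<in> range x\<close> by blast
  qed simp
  moreover have "card (range x) = CARD('n)"
    using card_image[OF x_inj] by simp
  ultimately have "UNIV \<subseteq> vec.span (range x)"
    by (intro vec.card_ge_dim_independent) (auto simp: card_cart_basis)
  then obtain g where "y = (\<Sum>z\<in>range x. g z *s z)"
    using vec.span_finite[of "range x"] by auto
  then show ?thesis
    by (intro that[of "\<lambda>i. g (x i)"]) (simp add: sum.reindex[OF x_inj])
qed


subsection \<open>Conjugations\<close>

definition conjugation :: "(complex^'n \<Rightarrow> complex^'n) \<Rightarrow> bool" where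
  "conjugation C \<longleftrightarrow>
     (\<forall>x y. C (x + y) = C x + C y) \<and> (\<forall>a x. C (a *s x) = cnj a *s C x) \<and>
     (\<forall>x. C (C x) = x) \<and> (\<forall>x y. cinner (C x) (C y) = cinner y x)"

lemma conjugation_fixed_subspace:
  assumes "conjugation C"
  shows "subspace {x. C x = x}"
proof -
  have "C 0 = 0"
    using assms unfolding conjugation_def by (metis complex_cnj_zero vector_smult_lzero)
  with assms show ?thesis
    unfolding conjugation_def subspace_def by (simp add: scaleR_eq_scale_of_real)
qed

lemma conjugation_fixed_cinner_real:
  assumes "conjugation C" and "C x = x" and "C y = y"
  shows "cinner x y = complex_of_real (x \<bullet> y)"
proof -
  have "cinner x y = cnj (cinner x y)"
    using assms by (metis conjugation_def cinner_commute_cnj)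
  then have "Im (cinner x y) = 0"
    by (metis cnj.sel(2) neg_equal_zero)
  then show ?thesis
    by (simp add: inner_eq_Re_cinner complex_eq_iff)
qed

lemma orthonormal_vec_independent:
  assumes "finite B" and "\<And>b b'. b \<in> B \<Longrightarrow> b' \<in> B \<Longrightarrow> cinner b b' = (if b = b' then 1 else 0)"
  shows "vec.independent B"
proof (rule vec.independent_if_scalars_zero[OF assms(1)])
  fix f x assume sum0: "(\<Sum>y\<in>B. f y *s y) = 0" and "x \<in> B"
  have "cinner (\<Sum>y\<in>B. f y *s y) x = f x"
    using \<open>x \<in> B\<close> assms(1)
    by (simp add: cinner_sum_left cinner_scale_left assms(2)[OF _ \<open>x \<in> B\<close>] if_distrib
        cong: if_cong)
  then show "f x = 0"
    using sum0 by simp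
qed

text \<open>Every vector is \<open>a + i b\<close> with \<open>a, b\<close> fixed by \<open>C\<close>, so a real spanning set of the
  fixed vectors spans \<open>\<complex>\<^sup>n\<close> over \<open>\<complex>\<close>.\<close>

lemma conjugation_fixed_span_complex_span:
  assumes C: "conjugation C" and B: "span B = {x. C x = x}"
  shows "vec.span B = UNIV"
proof -
  have "{x. C x = x} \<subseteq> vec.span B"
    unfolding B[symmetric]
    by (rule span_minimal[OF vec.span_superset])
      (simp add: subspace_def vec.span_zero vec.span_add scaleR_eq_scale_of_real vec.span_scale)
  moreover have "x \<in> vec.span B" if "\<And>y. C y = y \<Longrightarrow> y \<in> vec.span B" for x
  proof -
    have add: "C (y + z) = C y + C z" and scale: "C (c *s y) = cnj c *s C y"
      and invol: "C (C y) = y" for y z c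
      using C unfolding conjugation_def by blast+
    have diff: "C (y - z) = C y - C z" for y z
      by (metis add diff_add_cancel add_diff_cancel)
    define a where "a = (1/2 :: complex) *s (x + C x)"
    define b where "b = (- (\<i>/2)) *s (x - C x)"
    have "C a = a"
      unfolding a_def by (simp add: scale add invol add.commute)
    moreover have "C b = b"
      unfolding b_def by (simp add: scale diff invol vec_eq_iff algebra_simps)
    moreover have "x = a + \<i> *s b"
      unfolding a_def b_def by (simp add: vec_eq_iff algebra_simps)
    ultimately show ?thesis
      using that by (metis vec.span_add vec.span_scale)
  qed
  ultimately show ?thesis
    by auto
qed

lemma conjugation_fixed_orthonormal_basis:
  assumes C: "conjugation C"
  obtains e :: "'n \<Rightarrow> complex^'n"
  where "\<And>k. C (e k) = e k" and "\<And>k l. cinner (e k) (e l) = (if k = l then 1 else 0)"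
proof -
  obtain B where fixed: "B \<subseteq> {x. C x = x}" and orth: "pairwise orthogonal B"
    and unit: "\<And>x. x \<in> B \<Longrightarrow> norm x = 1" and "independent B"
    and span: "span B = {x. C x = x}"
    by (rule orthonormal_basis_subspace[OF conjugation_fixed_subspace[OF C]]) blast
  have "finite B"
    using independent_bound[OF \<open>independent B\<close>] by blast
  have orthonormal: "cinner b b' = (if b = b' then 1 else 0)" if "b \<in> B" "b' \<in> B" for b b'
  proof (cases "b = b'")
    case True
    then show ?thesis
      using unit[OF that(1)] by (simp add: cinner_self)
  next
    case False
    then have "b \<bullet> b' = 0"
      using orth that unfolding pairwise_def orthogonal_def by blast
    then show ?thesis
      using conjugation_fixed_cinner_real[OF C, of b b'] fixed that False by auto
  qed
  have "card B = vec.dim (UNIV :: (complex^'n) set)"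
    using vec.dim_eq_card_independent[OF orthonormal_vec_independent[OF \<open>finite B\<close> orthonormal]]
      conjugation_fixed_span_complex_span[OF C span] vec.dim_span by metis
  then obtain e where e: "bij_betw e (UNIV :: 'n set) B"
    using finite_same_card_bij[of "UNIV :: 'n set" B] \<open>finite B\<close> by (auto simp: vec_dim_card card_cart_basis)
  show ?thesis
  proof
    show "C (e k) = e k" for k
      using e fixed by (auto simp: bij_betw_def)
    show "cinner (e k) (e l) = (if k = l then 1 else 0)" for k l
      using e orthonormal by (auto simp: bij_betw_def inj_def)
  qed
qed

lemma unitary_mat_rows_orthonormal:
  fixes W :: "complex^'n^'n"
  assumes "\<And>k l. cinner (W $ k) (W $ l) = (if k = l then 1 else 0)"
  shows "unitary_mat W"
proof -
  have "W ** adjoint_mat W = mat 1"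
    using assms
    by (simp add: vec_eq_iff matrix_matrix_mult_def adjoint_mat_def cinner_def mat_def)
  then show ?thesis
    unfolding unitary_mat_def using matrix_left_right_inverse by blast
qed

lemma matrix_in_basis_entry:
  fixes T :: "complex^'n^'n" and e :: "'n \<Rightarrow> complex^'n"
  defines "W \<equiv> \<chi> k j. cnj (e k $ j)"
  shows "(W ** T ** adjoint_mat W) $ k $ l = cinner (T *v e l) (e k)"
proof -
  have "(W ** T ** adjoint_mat W) $ k $ l
      = (\<Sum>m\<in>UNIV. \<Sum>j\<in>UNIV. cnj (e k $ j) * T $ j $ m * e l $ m)"
    by (simp add: W_def matrix_matrix_mult_def adjoint_mat_def sum_distrib_right)
  also have "\<dots> = (\<Sum>j\<in>UNIV. (\<Sum>m\<in>UNIV. T $ j $ m * e l $ m) * cnj (e k $ j))"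
    by (subst sum.swap) (simp add: sum_distrib_left sum_distrib_right mult_ac)
  finally show ?thesis
    by (simp add: cinner_def matrix_vector_mult_def)
qed

theorem unitarily_equivalent_complex_symmetric_if_conjugation:
  fixes T :: "complex^'n^'n"
  assumes C: "conjugation C" and intertwine: "\<And>x. C (T *v x) = adjoint_mat T *v C x"
  shows "\<exists>S. complex_symmetric S \<and> unitarily_equivalent T S"
proof -
  obtain e :: "'n \<Rightarrow> complex^'n"
    where fixed: "\<And>k. C (e k) = e k"
      and orthonormal: "\<And>k l. cinner (e k) (e l) = (if k = l then 1 else 0)"
    using conjugation_fixed_orthonormal_basis[OF C] by blast
  define W where "W = (\<chi> k j. cnj (e k $ j))"
  have "cinner (W $ k) (W $ l) = cinner (e l) (e k)" for k l
    by (simp add: W_def cinner_def mult.commute)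
  then have W: "unitary_mat W"
    by (intro unitary_mat_rows_orthonormal) (simp add: orthonormal)
  have "cinner (T *v x) y = cinner (T *v y) x" if "C x = x" "C y = y" for x y
    using C that
    by (metis conjugation_def intertwine cinner_matrix_adjoint)
  then have "complex_symmetric (W ** T ** adjoint_mat W)"
    by (simp add: complex_symmetric_def vec_eq_iff transpose_def W_def matrix_in_basis_entry fixed)
  moreover have "T = adjoint_mat W ** (W ** T ** adjoint_mat W) ** W"
    using W unfolding unitary_mat_def by (metis matrix_mul_assoc matrix_mul_lid matrix_mul_rid)
  ultimately show ?thesis
    using W unfolding unitarily_equivalent_def by blast
qed


subsection \<open>The conjugation exchanging two eigenbases\<close>

locale conjugate_eigenbases =
  fixes T :: "complex^'n^'n" and lam :: "'n \<Rightarrow> complex" and u w :: "'n \<Rightarrow> complex^'n"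
  assumes lam_inj: "inj lam"
    and u_nonzero: "\<And>i. u i \<noteq> 0"
    and u_eigen: "\<And>i. T *v u i = lam i *s u i"
    and w_eigen: "\<And>i. adjoint_mat T *v w i = cnj (lam i) *s w i"
    and gram_transpose: "\<And>i j. cinner (u j) (u i) = cinner (w i) (w j)"
begin

lemma u_expansion:
  obtains c where "x = (\<Sum>i\<in>UNIV. c i *s u i)"
  using eigenvectors_distinct_eigenvalues_expansion[OF lam_inj u_nonzero u_eigen] by blast

lemma cinner_u_w_eq_0:
  assumes "i \<noteq> j"
  shows "cinner (u i) (w j) = 0"
proof -
  have "lam i * cinner (u i) (w j) = lam j * cinner (u i) (w j)"
    by (metis cinner_matrix_adjoint u_eigen w_eigen cinner_scale_left cinner_scale_right
        complex_cnj_cnj)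
  moreover have "lam i \<noteq> lam j"
    using lam_inj assms by (meson injD)
  ultimately show ?thesis
    by simp
qed

definition pairing :: "'n \<Rightarrow> complex" where
  "pairing i = cinner (u i) (w i)"

lemma cinner_expansion_w: "cinner (\<Sum>i\<in>UNIV. c i *s u i) (w j) = c j * pairing j"
proof -
  have "cinner (\<Sum>i\<in>UNIV. c i *s u i) (w j)
      = (\<Sum>i\<in>UNIV. if i = j then c j * pairing j else 0)"
    unfolding cinner_sum_left cinner_scale_left
    by (rule sum.cong) (auto simp: cinner_u_w_eq_0 pairing_def)
  then show ?thesis
    by simp
qed

lemma pairing_nonzero: "pairing j \<noteq> 0"
proof
  assume "pairing j = 0"
  obtain c where "w j = (\<Sum>i\<in>UNIV. c i *s u i)"
    using u_expansion by blast
  then have "cinner (w j) (w j) = 0"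
    using cinner_expansion_w[of c j] \<open>pairing j = 0\<close> by simp
  then show False
    using gram_transpose[of j j] u_nonzero[of j] by simp
qed

lemma eq_0_if_cinner_w_eq_0:
  assumes "\<And>j. cinner z (w j) = 0"
  shows "z = 0"
proof -
  obtain c where c: "z = (\<Sum>i\<in>UNIV. c i *s u i)"
    using u_expansion by blast
  then have "c j = 0" for j
    using assms[of j] cinner_expansion_w[of c j] pairing_nonzero[of j] by simp
  then show ?thesis
    using c by simp
qed

text \<open>The antilinear map with \<open>C u\<^sub>i = w\<^sub>i\<close>: by biorthogonality, the \<open>u\<close>-coefficients
  of \<open>x\<close> are \<open>\<langle>x, w\<^sub>i\<rangle> / \<langle>u\<^sub>i, w\<^sub>i\<rangle>\<close>.\<close>

definition C :: "complex^'n \<Rightarrow> complex^'n" where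
  "C x = (\<Sum>i\<in>UNIV. cnj (cinner x (w i) / pairing i) *s w i)"

lemma C_expansion: "C (\<Sum>i\<in>UNIV. c i *s u i) = (\<Sum>i\<in>UNIV. cnj (c i) *s w i)"
  unfolding C_def cinner_expansion_w using pairing_nonzero by simp

lemma C_add: "C (x + y) = C x + C y"
  by (simp add: C_def cinner_add_left add_divide_distrib sum.distrib)

lemma C_scale: "C (a *s x) = cnj a *s C x"
  by (simp add: C_def cinner_scale_left vec.scale_sum_right)

lemma C_zero: "C 0 = 0"
  by (simp add: C_def)

lemma C_sum: "C (\<Sum>i\<in>A. f i) = (\<Sum>i\<in>A. C (f i))"
  by (induction A rule: infinite_finite_induct) (auto simp: C_add C_zero)

lemma C_u: "C (u i) = w i"
proof -
  have "cinner (u i) (w j) / pairing j = (if j = i then 1 else 0)" for j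
    using cinner_u_w_eq_0[of i j] pairing_nonzero[of j] by (auto simp: pairing_def)
  then have "C (u i) = (\<Sum>j\<in>UNIV. if j = i then w j else 0)"
    unfolding C_def by (intro sum.cong) simp_all
  then show ?thesis
    by simp
qed

lemma cinner_C_C: "cinner (C x) (C y) = cinner y x"
proof -
  obtain a where a: "x = (\<Sum>i\<in>UNIV. a i *s u i)"
    using u_expansion by blast
  obtain b where b: "y = (\<Sum>i\<in>UNIV. b i *s u i)"
    using u_expansion by blast
  have "cinner (C x) (C y) = (\<Sum>i\<in>UNIV. \<Sum>j\<in>UNIV. b j * cnj (a i) * cinner (u j) (u i))"
    unfolding a b C_expansion cinner_linear_combinations by (simp add: gram_transpose mult.commute)
  also have "\<dots> = cinner y x"
    unfolding a b cinner_linear_combinations by (rule sum.swap)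
  finally show ?thesis .
qed

lemma C_w: "C (w i) = u i"
proof -
  have "cinner (C (w i)) (w j) = cinner (u j) (w i)" for j
    using cinner_C_C[of "w i" "u j"] by (simp add: C_u)
  then have "cinner (C (w i) - u i) (w j) = 0" for j
    using cinner_u_w_eq_0[of i j] cinner_u_w_eq_0[of j i]
    by (cases "i = j") (simp_all add: cinner_diff_left)
  then show ?thesis
    using eq_0_if_cinner_w_eq_0 by force
qed

lemma C_C: "C (C x) = x"
proof -
  obtain a where a: "x = (\<Sum>i\<in>UNIV. a i *s u i)"
    using u_expansion by blast
  show ?thesis
    unfolding a C_expansion C_sum by (simp add: C_scale C_u C_w)
qed

lemma C_intertwines: "C (T *v x) = adjoint_mat T *v C x"
proof -
  obtain a where a: "x = (\<Sum>i\<in>UNIV. a i *s u i)"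
    using u_expansion by blast
  have "T *v x = (\<Sum>i\<in>UNIV. (a i * lam i) *s u i)"
    unfolding a by (simp add: vec.sum vec.scale u_eigen)
  then show ?thesis
    unfolding a C_expansion
    by (simp add: C_expansion vec.sum vec.scale w_eigen mult.commute)
qed

lemma conjugation_C: "conjugation C"
  unfolding conjugation_def using C_add C_scale C_C cinner_C_C by blast

end


lemma gram_transpose_of_rel:
  fixes u v :: "'n::linorder \<Rightarrow> complex^'m"
  assumes "\<And>i. norm (u i) = 1" and "\<And>i. norm (v i) = 1" and "\<And>i. norm (\<alpha> i) = 1"
    and rel: "\<And>i j. i < j \<Longrightarrow> cinner (u i) (u j) = cnj (\<alpha> i) * \<alpha> j * cinner (v j) (v i)"
  shows "cinner (u j) (u i) = cinner (\<alpha> i *s v i) (\<alpha> j *s v j)"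
proof -
  have ww: "cinner (\<alpha> i *s v i) (\<alpha> j *s v j) = \<alpha> i * cnj (\<alpha> j) * cinner (v i) (v j)"
    by (simp add: cinner_scale_left cinner_scale_right)
  consider "j < i" | "i < j" | "i = j"
    by fastforce
  then show ?thesis
  proof cases
    case 1
    then show ?thesis
      using rel[OF 1] ww by (simp add: mult_ac)
  next
    case 2
    then show ?thesis
      using arg_cong[OF rel[OF 2], of cnj] ww by (simp add: cinner_commute_cnj mult_ac)
  next
    case 3
    then show ?thesis
      using ww assms(1-3) by (simp add: cinner_self complex_norm_square[symmetric] mult.commute)
  qed
qed

theorem lemma3:
  fixes T :: "complex^('n::{finite,linorder})^('n::{finite,linorder})"
    and lam :: "('n::{finite,linorder}) \<Rightarrow> complex"
    and u v :: "('n::{finite,linorder}) \<Rightarrow> complex^('n::{finite,linorder})"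
    and \<alpha> :: "('n::{finite,linorder}) \<Rightarrow> complex"
  assumes distinct: "inj lam"
    and u_unit: "\<And>i. norm (u i) = 1"
    and u_eig: "\<And>i. T *v u i = lam i *s u i"
    and v_unit: "\<And>i. norm (v i) = 1"
    and v_eig: "\<And>i. adjoint_mat T *v v i = cnj (lam i) *s v i"
    and alpha_mod: "\<And>i. norm (\<alpha> i) = 1"
    and rel: "\<And>i j. i < j \<Longrightarrow> cinner (u i) (u j) = cnj (\<alpha> i) * \<alpha> j * cinner (v j) (v i)"
  shows "\<exists>S. complex_symmetric S \<and> unitarily_equivalent T S"
proof -
  interpret conjugate_eigenbases T lam u "\<lambda>i. \<alpha> i *s v i"
  proof
    show "u i \<noteq> 0" for i
      using u_unit[of i] by auto
    show "adjoint_mat T *v (\<alpha> i *s v i) = cnj (lam i) *s (\<alpha> i *s v i)" for i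
      by (simp add: vec.scale v_eig mult.commute)
    show "cinner (u j) (u i) = cinner (\<alpha> i *s v i) (\<alpha> j *s v j)" for i j
      using gram_transpose_of_rel[OF u_unit v_unit alpha_mod rel] .
  qed (fact distinct u_eig)+
  show ?thesis
    using unitarily_equivalent_complex_symmetric_if_conjugation[OF conjugation_C C_intertwines] .
qed

end
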